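(* Let $\{\Theta_{kj}\}_{k,j\in[K]}$ be i.i.d. uniform on $[-\pi,\pi)$. For $\mathbf{P}\in[0,1]^K$ and $(\boldsymbol{\alpha},\boldsymbol{\gamma})\in[-\pi,\pi)^{2K}$ let $\beta_{kj}=\cos^2(\alpha_j+\Theta_{kj}-\Theta_{jj}-\gamma_k)$ and $R_{sum}(\mathbf{P},\boldsymbol{\alpha},\boldsymbol{\gamma})=\sum_{k=1}^K\ln\!\left(1+\frac{P_k\beta_{kk}}{\sum_{j\ne k}P_j\beta_{kj}+\frac12}\right)$. For any fixed (non-random) $\mathcal{S}\subset[K]$ with $|\mathcal{S}|=s$, any fixed $(\boldsymbol{\alpha},\boldsymbol{\gamma})\in[-\pi,\pi)^{2K}$, and any real $r$, $$\mathbb{P}\left[R_{sum}(\mathbf{1}_{\mathcal{S}},\boldsymbol{\alpha},\boldsymbol{\gamma})>r\right]\le e^{-\left(\frac{r}{32}-1\right)s},$$ where $\mathbf{1}_{\mathcal{S}}\in\{0,1\}^K$ has $k$-th component $1$ if $k\in\mathcal{S}$ and $0$ otherwise.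
   Context: The probability is over the random phases $\{\Theta_{kj}\}$. *)

theory Defs
  imports "HOL-Probability.Probability"
begin

text \<open>Indices [K] are rendered as {0..<K}. Phases Theta are a function on pairs (k,j).\<close>

definition beta :: "(nat \<Rightarrow> real) \<Rightarrow> (nat \<Rightarrow> real) \<Rightarrow> (nat \<times> nat \<Rightarrow> real) \<Rightarrow> nat \<Rightarrow> nat \<Rightarrow> real" where
  "beta \<alpha> \<gamma> \<Theta> k j = (cos (\<alpha> j + \<Theta> (k, j) - \<Theta> (j, j) - \<gamma> k))\<^sup>2"

definition Rsum :: "nat \<Rightarrow> (nat \<Rightarrow> real) \<Rightarrow> (nat \<Rightarrow> real) \<Rightarrow> (nat \<Rightarrow> real) \<Rightarrow> (nat \<times> nat \<Rightarrow> real) \<Rightarrow> real" where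
  "Rsum K P \<alpha> \<gamma> \<Theta> =
     (\<Sum>k<K. ln (1 + P k * beta \<alpha> \<gamma> \<Theta> k k /
        ((\<Sum>j\<in>{..<K} - {k}. P j * beta \<alpha> \<gamma> \<Theta> k j) + 1/2)))"

definition phase_space :: "nat \<Rightarrow> (nat \<times> nat \<Rightarrow> real) measure" where
  "phase_space K = PiM ({..<K} \<times> {..<K}) (\<lambda>_. uniform_measure lborel {-pi..<pi})"

definition ind_vec :: "nat set \<Rightarrow> nat \<Rightarrow> real" where
  "ind_vec S k = (if k \<in> S then 1 else 0)"

end

theory Submission
  imports Defs
begin

text \<open>
  By Chernoff's bound with parameter \<open>s/32\<close> it suffices to show
  \<open>E exp ((s/32) R) \<le> e\<^sup>s\<close>, where \<open>R = \<Sum>k\<in>S. t\<^sub>k\<close> with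
  \<open>t\<^sub>k = ln (1 + \<beta>\<^sub>k\<^sub>k / (I\<^sub>k + 1/2))\<close> and interference \<open>I\<^sub>k = \<Sum>j\<in>S-{k}. \<beta>\<^sub>k\<^sub>j\<close>.
  Since \<open>t\<^sub>k \<le> min 2 (1 / (I\<^sub>k + 1/2))\<close>, either \<open>I\<^sub>k\<close> is large and \<open>exp ((s/32) t\<^sub>k) \<le> e\<^bsup>1/4\<^esup>\<close>,
  or it is small and \<open>exp ((s/32) t\<^sub>k) \<le> e\<^bsup>3s/16\<^esup> e\<^bsup>-I\<^sub>k\<^esup>\<close>. Expanding the product of these
  two-term bounds over \<open>k \<in> S\<close>, every monomial is a product of factors
  \<open>exp (-cos\<^sup>2 (\<Theta>\<^sub>k\<^sub>j + c))\<close> over distinct off-diagonal phases, the shifts \<open>c\<close> depending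
  only on diagonal phases. Conditionally on the diagonal these factors are independent with
  mean at most \<open>3/4\<close>, so \<open>E exp ((s/32) R) \<le> (e\<^bsup>3s/16\<^esup> (3/4)\<^bsup>s-1\<^esup> + e\<^bsup>1/4\<^esup>)\<^sup>s \<le> e\<^sup>s\<close>
  for \<open>s \<ge> 17\<close>; for \<open>s \<le> 16\<close> the trivial bound \<open>R \<le> 2s\<close> suffices.
\<close>

abbreviation uniform_phase :: "real measure" where
  "uniform_phase \<equiv> uniform_measure lborel {-pi..<pi}"

lemma prob_space_uniform_phase: "prob_space uniform_phase"
  by (rule prob_space_uniform_measure) auto

lemma prob_space_phase_space: "prob_space (phase_space K)"
  unfolding phase_space_def by (intro prob_space_PiM prob_space_uniform_phase)

lemma measurable_phase_component[measurable]:
  assumes "k < K" "j < K"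
  shows "(\<lambda>\<Theta>. \<Theta> (k, j)) \<in> borel_measurable (phase_space K)"
proof -
  have "(\<lambda>\<Theta>. \<Theta> (k, j)) \<in> phase_space K \<rightarrow>\<^sub>M uniform_phase"
    unfolding phase_space_def using assms by (intro measurable_component_singleton) auto
  then show ?thesis by (simp add: measurable_def)
qed

lemma borel_measurable_Rsum: "Rsum K P \<alpha> \<gamma> \<in> borel_measurable (phase_space K)"
  unfolding Rsum_def beta_def by measurable

subsection \<open>Independent factors of a product measure\<close>

text \<open>
  Conditioning on the coordinates in \<open>I\<close>: the factors may depend on the frozen
  coordinates \<open>x\<close>, but for fixed \<open>x\<close> they are functions of distinct, hence independent,
  coordinates in \<open>J\<close>.
\<close>
lemma nn_integral_PiM_merge_prod_le:
  fixes N :: "'b measure" and h :: "('a \<Rightarrow> 'b) \<Rightarrow> 'a \<Rightarrow> 'b \<Rightarrow> ennreal"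
  assumes N: "prob_space N"
    and IJ: "finite I" "finite J" "I \<inter> J = {}" and P: "P \<subseteq> J"
    and g: "g \<in> borel_measurable (PiM (I \<union> J) (\<lambda>_. N))"
    and g_merge: "\<And>x y. g (merge I J (x, y)) = (\<Prod>p\<in>P. h x p (y p))"
    and h: "\<And>x p. h x p \<in> borel_measurable N"
    and mean_h: "\<And>x p. p \<in> P \<Longrightarrow> integral\<^sup>N N (h x p) \<le> c"
  shows "integral\<^sup>N (PiM (I \<union> J) (\<lambda>_. N)) g \<le> c ^ card P"
proof -
  interpret N: prob_space N by (fact N)
  interpret PS: product_sigma_finite "\<lambda>_. N"
    unfolding product_sigma_finite_def by (simp add: N.sigma_finite_measure_axioms)
  let ?h' = "\<lambda>x p. if p \<in> P then h x p else (\<lambda>_. 1)"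
  have inner: "(\<integral>\<^sup>+y. g (merge I J (x, y)) \<partial>PiM J (\<lambda>_. N)) \<le> c ^ card P" for x
  proof -
    have "(\<integral>\<^sup>+y. g (merge I J (x, y)) \<partial>PiM J (\<lambda>_. N))
        = (\<integral>\<^sup>+y. (\<Prod>p\<in>J. ?h' x p (y p)) \<partial>PiM J (\<lambda>_. N))"
      unfolding g_merge
      by (intro nn_integral_cong prod.mono_neutral_cong_left) (use P IJ(2) in auto)
    also have "\<dots> = (\<Prod>p\<in>J. integral\<^sup>N N (?h' x p))"
      by (rule PS.product_nn_integral_prod) (use IJ h in auto)
    also have "\<dots> = (\<Prod>p\<in>P. integral\<^sup>N N (h x p))"
      by (rule prod.mono_neutral_cong_right) (use P IJ(2) in \<open>auto simp: N.emeasure_space_1\<close>)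
    also have "\<dots> \<le> (\<Prod>p\<in>P. c)"
      by (rule prod_mono_ennreal) (rule mean_h)
    finally show ?thesis by simp
  qed
  have "integral\<^sup>N (PiM (I \<union> J) (\<lambda>_. N)) g
      = (\<integral>\<^sup>+x. (\<integral>\<^sup>+y. g (merge I J (x, y)) \<partial>PiM J (\<lambda>_. N)) \<partial>PiM I (\<lambda>_. N))"
    by (rule PS.product_nn_integral_fold) (use IJ g in auto)
  also have "\<dots> \<le> (\<integral>\<^sup>+x. c ^ card P \<partial>PiM I (\<lambda>_. N))"
    by (intro nn_integral_mono inner)
  also have "\<dots> = c ^ card P"
    by (simp add: prob_space.emeasure_space_1[OF prob_space_PiM[OF N]])
  finally show ?thesis .
qed

lemma exp_neg_le_one_minus_half:
  fixes x :: real
  assumes "0 \<le> x" "x \<le> 1"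
  shows "exp (- x) \<le> 1 - x / 2"
proof -
  have "exp (- x) \<le> 1 / (1 + x)"
    using exp_ge_add_one_self[of x] assms by (simp add: exp_minus field_simps)
  also have "\<dots> \<le> 1 - x / 2"
    using assms mult_right_le_one_le[of x x] by (simp add: field_simps)
  finally show ?thesis .
qed

lemma nn_integral_exp_neg_cos_sq_le:
  "(\<integral>\<^sup>+\<theta>. ennreal (exp (- (cos (\<theta> + c))\<^sup>2)) \<partial>uniform_phase) \<le> ennreal (3/4)"
proof -
  define f where "f = (\<lambda>\<theta>::real. 3/4 - cos (2 * (\<theta> + c)) / 4)"
  define F where "F = (\<lambda>\<theta>::real. 3 * \<theta> / 4 - sin (2 * (\<theta> + c)) / 8)"
  have f_meas[measurable]: "f \<in> borel_measurable borel" unfolding f_def by measurable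
  have f_nonneg: "0 \<le> f \<theta>" for \<theta>
    unfolding f_def using cos_le_one[of "2 * (\<theta> + c)"] by linarith
  have exp_le_f: "exp (- (cos (\<theta> + c))\<^sup>2) \<le> f \<theta>" for \<theta>
  proof -
    have "exp (- (cos (\<theta> + c))\<^sup>2) \<le> 1 - (cos (\<theta> + c))\<^sup>2 / 2"
      by (rule exp_neg_le_one_minus_half) (auto simp: abs_square_le_1)
    also have "\<dots> = f \<theta>"
      unfolding f_def cos_double cos_squared_eq by (simp add: field_simps)
    finally show ?thesis .
  qed
  have F_deriv: "(F has_real_derivative f \<theta>) (at \<theta>)" for \<theta>
    unfolding F_def f_def by (auto intro!: derivative_eq_intros)
  have "(\<integral>\<^sup>+\<theta>. ennreal (f \<theta>) * indicator {-pi..<pi} \<theta> \<partial>lborel)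
      \<le> (\<integral>\<^sup>+\<theta>. ennreal (f \<theta>) * indicator {-pi..pi} \<theta> \<partial>lborel)"
    by (intro nn_integral_mono) (auto split: split_indicator)
  also have "\<dots> = ennreal (F pi - F (- pi))"
    using nn_integral_FTC_Icc[OF f_meas, of "- pi" pi F] F_deriv f_nonneg by simp
  also have "F pi - F (- pi) = 3 * pi / 2"
    unfolding F_def by (simp add: distrib_left sin_add sin_diff)
  finally have integral_f: "(\<integral>\<^sup>+\<theta>. ennreal (f \<theta>) * indicator {-pi..<pi} \<theta> \<partial>lborel) \<le> ennreal (3 * pi / 2)" .
  have "(\<integral>\<^sup>+\<theta>. ennreal (exp (- (cos (\<theta> + c))\<^sup>2)) \<partial>uniform_phase) \<le> (\<integral>\<^sup>+\<theta>. ennreal (f \<theta>) \<partial>uniform_phase)"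
    by (intro nn_integral_mono ennreal_leI exp_le_f)
  also have "\<dots> = (\<integral>\<^sup>+\<theta>. ennreal (f \<theta>) * indicator {-pi..<pi} \<theta> \<partial>lborel) / ennreal (2 * pi)"
    by (subst nn_integral_uniform_measure) auto
  also have "\<dots> \<le> ennreal (3 * pi / 2) / ennreal (2 * pi)"
    by (rule divide_right_mono_ennreal[OF integral_f])
  also have "\<dots> = ennreal (3/4)"
    by (subst divide_ennreal) auto
  finally show ?thesis .
qed

lemma nn_integral_prod_exp_neg_beta_le:
  assumes P: "P \<subseteq> {p \<in> {..<K} \<times> {..<K}. fst p \<noteq> snd p}"
  shows "(\<integral>\<^sup>+\<Theta>. (\<Prod>p\<in>P. ennreal (exp (- beta \<alpha> \<gamma> \<Theta> (fst p) (snd p)))) \<partial>phase_space K)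
           \<le> ennreal ((3/4) ^ card P)"
proof -
  define I where "I = {p \<in> {..<K} \<times> {..<K}. fst p = snd p}"
  define J where "J = {p \<in> {..<K} \<times> {..<K}. fst p \<noteq> snd p}"
  have IJ: "{..<K} \<times> {..<K} = I \<union> J" "I \<inter> J = {}" "finite I" "finite J"
    unfolding I_def J_def by auto
  have diag: "(snd p, snd p) \<in> I" if "p \<in> P" for p
    using that P unfolding I_def by auto
  have meas: "(\<lambda>\<Theta>. \<Prod>p\<in>P. ennreal (exp (- beta \<alpha> \<gamma> \<Theta> (fst p) (snd p))))
      \<in> borel_measurable (phase_space K)"
  proof (rule borel_measurable_prod_ennreal)
    fix p assume "p \<in> P"
    with P have [simp]: "fst p < K" "snd p < K" by auto
    show "(\<lambda>\<Theta>. ennreal (exp (- beta \<alpha> \<gamma> \<Theta> (fst p) (snd p)))) \<in> borel_measurable (phase_space K)"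
      unfolding beta_def by measurable
  qed
  have PJ: "P \<subseteq> J" using P unfolding J_def .
  define h where "h = (\<lambda>x p t. ennreal (exp (- (cos (t + (\<alpha> (snd p) - x (snd p, snd p) - \<gamma> (fst p))))\<^sup>2)))"
  have "(\<integral>\<^sup>+\<Theta>. (\<Prod>p\<in>P. ennreal (exp (- beta \<alpha> \<gamma> \<Theta> (fst p) (snd p)))) \<partial>phase_space K)
      \<le> ennreal (3/4) ^ card P"
    unfolding phase_space_def IJ(1)
  proof (rule nn_integral_PiM_merge_prod_le[OF prob_space_uniform_phase IJ(3,4,2) PJ
        meas[unfolded phase_space_def IJ(1)], where h = h])
    show "(\<Prod>p\<in>P. ennreal (exp (- beta \<alpha> \<gamma> (merge I J (x, y)) (fst p) (snd p)))) = (\<Prod>p\<in>P. h x p (y p))"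
      for x y
    proof (rule prod.cong)
      fix p assume "p \<in> P"
      with PJ diag IJ(2) have "merge I J (x, y) p = y p" "merge I J (x, y) (snd p, snd p) = x (snd p, snd p)"
        by (auto simp: merge_def)
      then show "ennreal (exp (- beta \<alpha> \<gamma> (merge I J (x, y)) (fst p) (snd p))) = h x p (y p)"
        by (simp add: beta_def h_def add_diff_eq add.commute)
    qed simp
    show "h x p \<in> borel_measurable uniform_phase" for x p
    proof -
      have borel_eq: "borel_measurable uniform_phase = borel_measurable borel"
        by (rule measurable_cong_sets) simp_all
      show ?thesis unfolding borel_eq h_def by measurable
    qed
    show "integral\<^sup>N uniform_phase (h x p) \<le> ennreal (3/4)" for x p
      unfolding h_def by (rule nn_integral_exp_neg_cos_sq_le)
  qed
  then show ?thesis by (simp add: ennreal_power)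
qed

definition interference ::
    "nat set \<Rightarrow> (nat \<Rightarrow> real) \<Rightarrow> (nat \<Rightarrow> real) \<Rightarrow> (nat \<times> nat \<Rightarrow> real) \<Rightarrow> nat \<Rightarrow> real" where
  "interference S \<alpha> \<gamma> \<Theta> k = (\<Sum>j\<in>S - {k}. beta \<alpha> \<gamma> \<Theta> k j)"

lemma beta_nonneg: "0 \<le> beta \<alpha> \<gamma> \<Theta> k j"
  unfolding beta_def by simp

lemma beta_le_one: "beta \<alpha> \<gamma> \<Theta> k j \<le> 1"
  unfolding beta_def by (simp add: abs_square_le_1)

lemma interference_nonneg: "0 \<le> interference S \<alpha> \<gamma> \<Theta> k"
  unfolding interference_def by (intro sum_nonneg beta_nonneg)

lemma borel_measurable_interference:
  assumes "S \<subseteq> {..<K}" "k < K"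
  shows "(\<lambda>\<Theta>. interference S \<alpha> \<gamma> \<Theta> k) \<in> borel_measurable (phase_space K)"
  unfolding interference_def
proof (rule borel_measurable_sum)
  fix j assume "j \<in> S - {k}"
  with assms have [simp]: "j < K" by auto
  show "(\<lambda>\<Theta>. beta \<alpha> \<gamma> \<Theta> k j) \<in> borel_measurable (phase_space K)"
    unfolding beta_def using assms(2) by measurable
qed

lemma Rsum_ind_vec:
  assumes "S \<subseteq> {..<K}"
  shows "Rsum K (ind_vec S) \<alpha> \<gamma> \<Theta>
           = (\<Sum>k\<in>S. ln (1 + beta \<alpha> \<gamma> \<Theta> k k / (interference S \<alpha> \<gamma> \<Theta> k + 1/2)))"
proof -
  have inner: "(\<Sum>j\<in>{..<K} - {k}. ind_vec S j * beta \<alpha> \<gamma> \<Theta> k j) = interference S \<alpha> \<gamma> \<Theta> k" for k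
    unfolding interference_def
    by (rule sum.mono_neutral_cong_right) (use assms in \<open>auto simp: ind_vec_def\<close>)
  show ?thesis
    unfolding Rsum_def inner
    by (rule sum.mono_neutral_cong_right) (use assms in \<open>auto simp: ind_vec_def\<close>)
qed

lemma nn_integral_prod_exp_neg_interference_le:
  assumes S: "S \<subseteq> {..<K}" and B: "B \<subseteq> S"
  shows "(\<integral>\<^sup>+\<Theta>. ennreal (\<Prod>k\<in>B. exp (- interference S \<alpha> \<gamma> \<Theta> k)) \<partial>phase_space K)
           \<le> ennreal ((3/4) ^ (card B * (card S - 1)))"
proof -
  have fin: "finite S" "finite B" using S B by (meson finite_lessThan finite_subset)+
  define P where "P = Sigma B (\<lambda>k. S - {k})"
  have prod_eq: "ennreal (\<Prod>k\<in>B. exp (- interference S \<alpha> \<gamma> \<Theta> k))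
      = (\<Prod>p\<in>P. ennreal (exp (- beta \<alpha> \<gamma> \<Theta> (fst p) (snd p))))" for \<Theta>
  proof -
    have "(\<Prod>k\<in>B. exp (- interference S \<alpha> \<gamma> \<Theta> k)) = (\<Prod>k\<in>B. \<Prod>j\<in>S - {k}. exp (- beta \<alpha> \<gamma> \<Theta> k j))"
      unfolding interference_def using fin by (simp add: exp_sum sum_negf[symmetric])
    also have "\<dots> = (\<Prod>p\<in>P. exp (- beta \<alpha> \<gamma> \<Theta> (fst p) (snd p)))"
      unfolding P_def using fin by (subst prod.Sigma) (auto simp: case_prod_unfold)
    finally show ?thesis by (simp add: prod_ennreal)
  qed
  have "card P = (\<Sum>k\<in>B. card (S - {k}))"
    unfolding P_def using fin by simp
  also have "\<dots> = card B * (card S - 1)"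
    using B by (simp add: card_Diff_singleton subsetD)
  finally have card_P: "card P = card B * (card S - 1)" .
  have "P \<subseteq> {p \<in> {..<K} \<times> {..<K}. fst p \<noteq> snd p}"
    unfolding P_def using S B by auto
  then show ?thesis
    unfolding prod_eq card_P[symmetric] by (rule nn_integral_prod_exp_neg_beta_le)
qed

subsection \<open>Pointwise bounds on the rate\<close>

lemma rate_term_bounds:
  fixes I b :: real
  assumes "0 \<le> I" "0 \<le> b" "b \<le> 1"
  shows "0 \<le> ln (1 + b / (I + 1/2))" "ln (1 + b / (I + 1/2)) \<le> 1 / (I + 1/2)"
    and "ln (1 + b / (I + 1/2)) \<le> 2"
proof -
  have "0 \<le> b / (I + 1/2)" using assms by simp
  then show "0 \<le> ln (1 + b / (I + 1/2))" by simp
  have "ln (1 + b / (I + 1/2)) \<le> b / (I + 1/2)"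
    using \<open>0 \<le> b / (I + 1/2)\<close> by (rule ln_add_one_self_le_self)
  also have "\<dots> \<le> 1 / (I + 1/2)" using assms by (simp add: divide_right_mono)
  finally show "ln (1 + b / (I + 1/2)) \<le> 1 / (I + 1/2)" .
  also have "\<dots> \<le> 2" using assms(1) by (simp add: field_simps)
  finally show "ln (1 + b / (I + 1/2)) \<le> 2" .
qed

text \<open>
  If \<open>I \<ge> s/8\<close> the rate is at most \<open>8/s\<close>; otherwise it is at most
  \<open>2 \<le> 6 - 32 I / s\<close>.
\<close>
lemma exp_scaled_rate_term_le:
  fixes I b s :: real
  assumes "0 \<le> I" "0 \<le> b" "b \<le> 1" "0 \<le> s"
  shows "exp (s / 32 * ln (1 + b / (I + 1/2))) \<le> exp (3 * s / 16) * exp (- I) + exp (1/4)"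
proof -
  define t where "t = ln (1 + b / (I + 1/2))"
  note t_bounds = rate_term_bounds[OF assms(1-3), folded t_def]
  show ?thesis
  proof (cases "s / 8 \<le> I")
    case True
    have "s / 32 * t \<le> s / 32 * (1 / (I + 1/2))"
      using assms(4) by (intro mult_left_mono t_bounds(2)) simp
    also have "\<dots> \<le> 1/4" using True assms by (simp add: field_simps)
    finally have "exp (s / 32 * t) \<le> exp (1/4)" by simp
    then show ?thesis unfolding t_def by (simp add: add_increasing)
  next
    case False
    have "s / 32 * t \<le> s / 32 * 2" using assms(4) by (intro mult_left_mono t_bounds(3)) simp
    also have "\<dots> \<le> 3 * s / 16 + (- I)" using False by simp
    finally have "exp (s / 32 * t) \<le> exp (3 * s / 16) * exp (- I)" by (simp flip: exp_add)
    then show ?thesis unfolding t_def using exp_gt_zero[of "1/4"] by linarith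
  qed
qed

lemma Rsum_ind_vec_le:
  assumes "S \<subseteq> {..<K}"
  shows "Rsum K (ind_vec S) \<alpha> \<gamma> \<Theta> \<le> 2 * real (card S)"
proof -
  have "Rsum K (ind_vec S) \<alpha> \<gamma> \<Theta> \<le> (\<Sum>k\<in>S. 2)"
    unfolding Rsum_ind_vec[OF assms]
    by (intro sum_mono rate_term_bounds(3) interference_nonneg beta_nonneg beta_le_one)
  then show ?thesis by simp
qed

lemma prod_affine_eq_sum_Pow:
  fixes G :: "'a \<Rightarrow> 'b :: comm_semiring_1"
  assumes "finite S"
  shows "(\<Prod>k\<in>S. C * G k + a) = (\<Sum>B\<in>Pow S. C ^ card B * a ^ card (S - B) * (\<Prod>k\<in>B. G k))"
  unfolding prod_add[OF assms] by (intro sum.cong refl) (simp add: prod.distrib mult_ac)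

lemma exp_Rsum_le_sum_Pow:
  assumes S: "S \<subseteq> {..<K}"
  defines "C \<equiv> exp (3 * real (card S) / 16)" and "a \<equiv> exp (1/4)"
  shows "exp (card S / 32 * Rsum K (ind_vec S) \<alpha> \<gamma> \<Theta>)
           \<le> (\<Sum>B\<in>Pow S. C ^ card B * a ^ card (S - B) * (\<Prod>k\<in>B. exp (- interference S \<alpha> \<gamma> \<Theta> k)))"
proof -
  have fin: "finite S" using S finite_subset by blast
  have "exp (card S / 32 * Rsum K (ind_vec S) \<alpha> \<gamma> \<Theta>)
      = (\<Prod>k\<in>S. exp (card S / 32 * ln (1 + beta \<alpha> \<gamma> \<Theta> k k / (interference S \<alpha> \<gamma> \<Theta> k + 1/2))))"
    unfolding Rsum_ind_vec[OF S] sum_distrib_left using fin by (simp add: exp_sum)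
  also have "\<dots> \<le> (\<Prod>k\<in>S. C * exp (- interference S \<alpha> \<gamma> \<Theta> k) + a)"
    unfolding C_def a_def
    by (intro prod_mono conjI exp_ge_zero exp_scaled_rate_term_le interference_nonneg beta_nonneg beta_le_one) simp
  also have "\<dots> = (\<Sum>B\<in>Pow S. C ^ card B * a ^ card (S - B) * (\<Prod>k\<in>B. exp (- interference S \<alpha> \<gamma> \<Theta> k)))"
    by (rule prod_affine_eq_sum_Pow[OF fin])
  finally show ?thesis .
qed

lemma moment_base_le_exp_one:
  assumes "17 \<le> s"
  shows "exp (3 * real s / 16) * (3/4) ^ (s - 1) + exp (1/4) \<le> exp 1"
proof -
  have exp_le: "exp x \<le> 1 / (1 - x)" if "x < 1" for x :: real
    using exp_ge_add_one_self[of "- x"] that by (simp add: exp_minus field_simps)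
  have "exp (3 * real s / 16) = exp (3/16) ^ s"
    by (simp flip: exp_of_nat_mult)
  also have "\<dots> \<le> (16/13) ^ s"
    using exp_le[of "3/16"] by (intro power_mono) auto
  finally have "exp (3 * real s / 16) * (3/4) ^ (s - 1) \<le> (16/13) ^ s * (3/4) ^ (s - 1)"
    by (rule mult_right_mono) simp
  also have "\<dots> = 4/3 * (12/13) ^ s"
    using assms by (cases s) (simp_all add: power_mult_distrib[symmetric] field_simps)
  also have "\<dots> \<le> 4/3 * (12/13) ^ 17"
    by (intro mult_left_mono power_decreasing assms) auto
  also have "\<dots> \<le> 2/3" by (simp add: power_divide)
  finally have "exp (3 * real s / 16) * (3/4) ^ (s - 1) \<le> 2/3" .
  moreover have "exp (1/4 :: real) \<le> 4/3" using exp_le[of "1/4"] by simp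
  moreover have "2 \<le> exp (1 :: real)" using exp_ge_add_one_self[of 1] by simp
  ultimately show ?thesis by linarith
qed

subsection \<open>The exponential moment of the sum rate\<close>

lemma nn_integral_exp_Rsum_le:
  assumes S: "S \<subseteq> {..<K}"
  shows "(\<integral>\<^sup>+\<Theta>. ennreal (exp (card S / 32 * Rsum K (ind_vec S) \<alpha> \<gamma> \<Theta>)) \<partial>phase_space K)
           \<le> ennreal (exp (card S))"
proof (cases "card S \<le> 16")
  case True
  have "card S / 32 * Rsum K (ind_vec S) \<alpha> \<gamma> \<Theta> \<le> card S" for \<Theta>
  proof -
    have "card S / 32 * Rsum K (ind_vec S) \<alpha> \<gamma> \<Theta> \<le> card S / 32 * (2 * real (card S))"
      by (intro mult_left_mono Rsum_ind_vec_le[OF S]) simp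
    also have "\<dots> \<le> card S"
      using True mult_left_mono[of "real (card S)" 16 "real (card S)"] by (simp add: field_simps)
    finally show ?thesis .
  qed
  then have "(\<integral>\<^sup>+\<Theta>. ennreal (exp (card S / 32 * Rsum K (ind_vec S) \<alpha> \<gamma> \<Theta>)) \<partial>phase_space K)
      \<le> (\<integral>\<^sup>+\<Theta>. ennreal (exp (card S)) \<partial>phase_space K)"
    by (intro nn_integral_mono ennreal_leI) simp
  then show ?thesis
    by (simp add: prob_space.emeasure_space_1[OF prob_space_phase_space])
next
  case False
  have fin: "finite S" using S finite_subset by blast
  define C a q where "C = exp (3 * real (card S) / 16)" and "a = exp (1/4 :: real)" and "q = (3/4 :: real) ^ (card S - 1)"
  define c where "c B = C ^ card B * a ^ card (S - B)" for B
  define Q where "Q B \<Theta> = (\<Prod>k\<in>B. exp (- interference S \<alpha> \<gamma> \<Theta> k))" for B \<Theta>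
  have c_nonneg: "0 \<le> c B" for B unfolding c_def C_def a_def by simp
  have Q_nonneg: "0 \<le> Q B \<Theta>" for B \<Theta> unfolding Q_def by (simp add: prod_nonneg)
  have Q_meas: "(\<lambda>\<Theta>. ennreal (Q B \<Theta>)) \<in> borel_measurable (phase_space K)" if "B \<subseteq> S" for B
  proof -
    have [measurable]: "(\<lambda>\<Theta>. interference S \<alpha> \<gamma> \<Theta> k) \<in> borel_measurable (phase_space K)" if "k \<in> B" for k
      using S \<open>B \<subseteq> S\<close> that by (intro borel_measurable_interference) auto
    show ?thesis unfolding Q_def by measurable
  qed
  have Q_int: "(\<integral>\<^sup>+\<Theta>. ennreal (Q B \<Theta>) \<partial>phase_space K) \<le> ennreal (q ^ card B)" if "B \<subseteq> S" for B
    using nn_integral_prod_exp_neg_interference_le[OF S that]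
    unfolding Q_def q_def by (simp add: power_mult[symmetric] mult.commute)
  have "(\<integral>\<^sup>+\<Theta>. ennreal (exp (card S / 32 * Rsum K (ind_vec S) \<alpha> \<gamma> \<Theta>)) \<partial>phase_space K)
      \<le> (\<integral>\<^sup>+\<Theta>. ennreal (\<Sum>B\<in>Pow S. c B * Q B \<Theta>) \<partial>phase_space K)"
    using exp_Rsum_le_sum_Pow[OF S]
    by (intro nn_integral_mono ennreal_leI) (simp add: c_def Q_def C_def a_def mult.assoc)
  also have "\<dots> = (\<integral>\<^sup>+\<Theta>. (\<Sum>B\<in>Pow S. ennreal (c B) * ennreal (Q B \<Theta>)) \<partial>phase_space K)"
    by (intro nn_integral_cong) (simp add: c_nonneg Q_nonneg ennreal_mult sum_ennreal[symmetric])
  also have "\<dots> = (\<Sum>B\<in>Pow S. ennreal (c B) * (\<integral>\<^sup>+\<Theta>. ennreal (Q B \<Theta>) \<partial>phase_space K))"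
    using Q_meas by (subst nn_integral_sum) (auto simp: nn_integral_cmult intro!: borel_measurable_times_ennreal)
  also have "\<dots> \<le> (\<Sum>B\<in>Pow S. ennreal (c B) * ennreal (q ^ card B))"
    using Q_int by (intro sum_mono mult_left_mono) auto
  also have "\<dots> = ennreal (\<Sum>B\<in>Pow S. c B * q ^ card B)"
    by (simp add: c_nonneg q_def ennreal_mult sum_ennreal[symmetric])
  also have "(\<Sum>B\<in>Pow S. c B * q ^ card B) = (C * q + a) ^ card S"
    using prod_affine_eq_sum_Pow[OF fin, of C "\<lambda>_. q" a] by (simp add: c_def)
  also have "ennreal ((C * q + a) ^ card S) \<le> ennreal (exp (card S))"
  proof -
    have "(C * q + a) ^ card S \<le> exp 1 ^ card S"
      using moment_base_le_exp_one[of "card S"] False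
      by (intro power_mono) (auto simp: C_def q_def a_def)
    then show ?thesis by (simp add: ennreal_leI flip: exp_of_nat_mult)
  qed
  finally show ?thesis .
qed

theorem lemma3:
  fixes K s :: nat and S :: "nat set" and \<alpha> \<gamma> :: "nat \<Rightarrow> real" and r :: real
  assumes "S \<subseteq> {..<K}" and "card S = s"
    and "\<And>k. k < K \<Longrightarrow> \<alpha> k \<in> {-pi..<pi}"
    and "\<And>k. k < K \<Longrightarrow> \<gamma> k \<in> {-pi..<pi}"
  shows "measure (phase_space K) {\<Theta> \<in> space (phase_space K). Rsum K (ind_vec S) \<alpha> \<gamma> \<Theta> > r}
           \<le> exp (- (r / 32 - 1) * real s)"
proof -
  interpret prob_space "phase_space K" by (rule prob_space_phase_space)
  let ?R = "Rsum K (ind_vec S) \<alpha> \<gamma>"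
  show ?thesis
  proof (cases "s = 0")
    case True
    then show ?thesis by simp
  next
    case False
    have R_meas[measurable]: "?R \<in> borel_measurable (phase_space K)" by (rule borel_measurable_Rsum)
    have "emeasure (phase_space K) {\<Theta> \<in> space (phase_space K). ?R \<Theta> > r}
        \<le> emeasure (phase_space K) {\<Theta> \<in> space (phase_space K). ?R \<Theta> \<ge> r}"
      by (intro emeasure_mono) auto
    also have "\<dots> \<le> ennreal (exp (- (s / 32) * r))
        * (\<integral>\<^sup>+\<Theta>. ennreal (exp (s / 32 * ?R \<Theta>)) * indicator (space (phase_space K)) \<Theta> \<partial>phase_space K)"
      using False by (intro Chernoff_ineq_nn_integral_ge) auto
    also have "\<dots> \<le> ennreal (exp (- (s / 32) * r)) * ennreal (exp s)"
      using nn_integral_exp_Rsum_le[OF assms(1), of \<alpha> \<gamma>] assms(2)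
      by (subst nn_integral_cong[where v = "\<lambda>\<Theta>. ennreal (exp (s / 32 * ?R \<Theta>))"])
        (auto intro: mult_left_mono)
    also have "\<dots> = ennreal (exp (- (r / 32 - 1) * real s))"
      by (simp add: ennreal_mult[symmetric] flip: exp_add) (simp add: algebra_simps)
    finally show ?thesis
      by (simp add: emeasure_eq_measure)
  qed
qed

end
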